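(* Let $G=(U,V,E)$ be a signed bipartite graph, let $p\ge 2$ and $q\ge 1$ be integers, and let $B$ be a balanced $(p,q)$-biclique of $G$ with vertex sides $L$ and $R$, where $L$ lies in one partition of $G$, $R$ lies in the other, $|L|=p$ and $|R|=q$. Write the vertices of $L$ in decreasing order of priority as $u,w_1,\dots,w_{p-1}$, i.e. $\rho(u)>\rho(w_1)>\cdots>\rho(w_{p-1})$. For each $v\in R$ consider the signed $p$-wedge $\omega_v=\langle u,w_1,\dots,w_{p-1},v\rangle$. Then all the signed $p$-wedges $\omega_v$, $v\in R$, are of the same type.
   Context: A signed bipartite graph $G=(U,V,E)$ has disjoint vertex sets $U,V$, edge set $E\subseteq U\times V$, and each edge carries a sign $+$ or $-$. A biclique is a complete bipartite subgraph; a $(p,q)$-biclique is a biclique with $p$ vertices on one side and $q$ on the other. A butterfly in a biclique is the 4-cycle induced by two vertices $a,a'$ from one side and two vertices $b,b'$ from the other side; it is balanced if it contains an even number of negative edges. A $(p,q)$-biclique is balanced if every butterfly contained in it is balanced. Vertex priority: for vertices $a,b$, $\rho(a)>\rho(b)$ iff $\deg(a)>\deg(b)$, or $\deg(a)=\deg(b)$ and $\mathrm{id}(a)>\mathrm{id}(b)$, where $\mathrm{id}$ is a fixed injective vertex numbering. A signed $p$-wedge is a tuple $\langle u,w_1,\dots,w_{p-1},v\rangle$ where $u,w_1,\dots,w_{p-1}$ are distinct vertices of the same partition with $\rho(u)>\rho(w_1)>\cdots>\rho(w_{p-1})$, $v$ is in the opposite partition, and $v$ is adjacent to each of $u,w_1,\dots,w_{p-1}$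 (with the signs of these $p$ edges). Its type is the word $\kappa=c_1c_2\cdots c_{p-1}$ over $\{s,d\}$, where $c_i=s$ if the sign of edge $(u,v)$ equals the sign of edge $(v,w_i)$, and $c_i=d$ otherwise. *)

theory Defs
  imports Main
begin

text \<open>A signed bipartite graph is given by vertex sets U, V, an edge set
 E \<subseteq> U \<times> V and a sign function sg on edges (True = positive, False = negative).\<close>

definition signed_bipartite :: "'a set \<Rightarrow> 'a set \<Rightarrow> ('a \<times> 'a) set \<Rightarrow> bool" where
  "signed_bipartite U V E \<longleftrightarrow> finite U \<and> finite V \<and> U \<inter> V = {} \<and> E \<subseteq> U \<times> V"

definition adj :: "('a \<times> 'a) set \<Rightarrow> 'a \<Rightarrow> 'a \<Rightarrow> bool" where
  "adj E x y \<longleftrightarrow> (x, y) \<in> E \<or> (y, x) \<in> E"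

definition esign :: "('a \<times> 'a) set \<Rightarrow> ('a \<times> 'a \<Rightarrow> bool) \<Rightarrow> 'a \<Rightarrow> 'a \<Rightarrow> bool" where
  "esign E sg x y = (if (x, y) \<in> E then sg (x, y) else sg (y, x))"

definition deg :: "('a \<times> 'a) set \<Rightarrow> 'a \<Rightarrow> nat" where
  "deg E x = card {y. adj E x y}"

definition rho_gt :: "('a \<times> 'a) set \<Rightarrow> ('a \<Rightarrow> nat) \<Rightarrow> 'a \<Rightarrow> 'a \<Rightarrow> bool" where
  "rho_gt E vid a b \<longleftrightarrow> deg E a > deg E b \<or> (deg E a = deg E b \<and> vid a > vid b)"

definition is_biclique :: "'a set \<Rightarrow> 'a set \<Rightarrow> ('a \<times> 'a) set \<Rightarrow> 'a set \<Rightarrow> 'a set \<Rightarrow> bool" where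
  "is_biclique U V E L R \<longleftrightarrow>
     ((L \<subseteq> U \<and> R \<subseteq> V) \<or> (L \<subseteq> V \<and> R \<subseteq> U)) \<and> (\<forall>a\<in>L. \<forall>b\<in>R. adj E a b)"

definition is_pq_biclique :: "'a set \<Rightarrow> 'a set \<Rightarrow> ('a \<times> 'a) set \<Rightarrow> nat \<Rightarrow> nat \<Rightarrow> 'a set \<Rightarrow> 'a set \<Rightarrow> bool" where
  "is_pq_biclique U V E p q L R \<longleftrightarrow> is_biclique U V E L R \<and> card L = p \<and> card R = q"

definition balanced_butterfly :: "('a \<times> 'a) set \<Rightarrow> ('a \<times> 'a \<Rightarrow> bool) \<Rightarrow> 'a \<Rightarrow> 'a \<Rightarrow> 'a \<Rightarrow> 'a \<Rightarrow> bool" where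
  "balanced_butterfly E sg a a' b b' \<longleftrightarrow>
     even (length (filter Not [esign E sg a b, esign E sg a b', esign E sg a' b, esign E sg a' b']))"

definition balanced_biclique :: "('a \<times> 'a) set \<Rightarrow> ('a \<times> 'a \<Rightarrow> bool) \<Rightarrow> 'a set \<Rightarrow> 'a set \<Rightarrow> bool" where
  "balanced_biclique E sg L R \<longleftrightarrow>
     (\<forall>a\<in>L. \<forall>a'\<in>L. \<forall>b\<in>R. \<forall>b'\<in>R. a \<noteq> a' \<longrightarrow> b \<noteq> b' \<longrightarrow> balanced_butterfly E sg a a' b b')"

datatype wchar = S | D

text \<open>A signed p-wedge <u, w_1, ..., w_{p-1}, v>, represented by the list u # ws
  of same-side vertices and the opposite vertex v.\<close>
definition signed_wedge :: "'a set \<Rightarrow> 'a set \<Rightarrow> ('a \<times> 'a) set \<Rightarrow> ('a \<Rightarrow> nat) \<Rightarrow> nat \<Rightarrow> 'a list \<Rightarrow> 'a \<Rightarrow> bool" where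
  "signed_wedge U V E vid p xs v \<longleftrightarrow>
     length xs = p \<and> distinct xs \<and> sorted_wrt (rho_gt E vid) xs \<and>
     ((set xs \<subseteq> U \<and> v \<in> V) \<or> (set xs \<subseteq> V \<and> v \<in> U)) \<and> (\<forall>x\<in>set xs. adj E x v)"

definition wedge_type :: "('a \<times> 'a) set \<Rightarrow> ('a \<times> 'a \<Rightarrow> bool) \<Rightarrow> 'a list \<Rightarrow> 'a \<Rightarrow> wchar list" where
  "wedge_type E sg xs v = map (\<lambda>w. if esign E sg (hd xs) v = esign E sg v w then S else D) (tl xs)"

end

theory Submission
  imports Defs
begin

text \<open>For distinct \<open>v, v'\<close> in \<open>R\<close>, the butterfly on \<open>u, w\<^sub>i, v, v'\<close> is balanced, i.e. the
  product of the signs of \<open>(u,v), (w\<^sub>i,v)\<close> equals that of \<open>(u,v'), (w\<^sub>i,v')\<close>; so the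
  \<open>i\<close>-th letter of the wedge type is the same for \<open>v\<close> and \<open>v'\<close>.\<close>

lemma esign_commute:
  assumes "signed_bipartite U V E" and "adj E a b"
  shows "esign E sg b a = esign E sg a b"
  using assms unfolding signed_bipartite_def adj_def esign_def by auto

lemma balanced_butterfly_iff:
  "balanced_butterfly E sg a a' b b' \<longleftrightarrow>
     (esign E sg a b = esign E sg a' b) = (esign E sg a b' = esign E sg a' b')"
  unfolding balanced_butterfly_def
  by (cases "esign E sg a b"; cases "esign E sg a b'"; cases "esign E sg a' b";
      cases "esign E sg a' b'") auto

lemma signed_wedge_if_biclique:
  assumes "is_biclique U V E L R" and "set xs = L" and "distinct xs"
    and "sorted_wrt (rho_gt E vid) xs" and "v \<in> R"
  shows "signed_wedge U V E vid (card L) xs v"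
proof -
  have "length xs = card L" using assms(2,3) distinct_card by metis
  then show ?thesis using assms unfolding is_biclique_def signed_wedge_def by blast
qed

lemma wedge_type_eq_if_balanced_biclique:
  assumes G: "signed_bipartite U V E" and B: "is_biclique U V E L R"
    and bal: "balanced_biclique E sg L R"
    and xs: "set xs \<subseteq> L" "distinct xs" and v: "v \<in> R" and v': "v' \<in> R"
  shows "wedge_type E sg xs v = wedge_type E sg xs v'"
proof (cases "v = v'")
  case False
  show ?thesis
  proof (cases xs)
    case (Cons u ws)
    have "(esign E sg u v = esign E sg v w) = (esign E sg u v' = esign E sg v' w)"
      if w: "w \<in> set ws" for w
    proof -
      have "u \<in> L" "w \<in> L" "u \<noteq> w" using Cons w xs by auto
      then have "balanced_butterfly E sg u w v v'"
        using bal v v' False unfolding balanced_biclique_def by blast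
      moreover have "adj E w v" "adj E w v'"
        using B \<open>w \<in> L\<close> v v' unfolding is_biclique_def by auto
      ultimately show ?thesis
        using esign_commute[OF G, of w v sg] esign_commute[OF G, of w v' sg]
        by (simp add: balanced_butterfly_iff)
    qed
    then show ?thesis unfolding wedge_type_def Cons by simp
  qed (simp add: wedge_type_def)
qed simp

theorem lemma1:
  fixes U V :: "'a set" and E :: "('a \<times> 'a) set" and sg :: "'a \<times> 'a \<Rightarrow> bool"
    and vid :: "'a \<Rightarrow> nat" and p q :: nat and L R :: "'a set" and xs :: "'a list"
  assumes "signed_bipartite U V E"
    and "inj_on vid (U \<union> V)"
    and "p \<ge> 2" and "q \<ge> 1"
    and "is_pq_biclique U V E p q L R"
    and "balanced_biclique E sg L R"
    and "set xs = L" and "distinct xs" and "sorted_wrt (rho_gt E vid) xs"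
  shows "(\<forall>v\<in>R. signed_wedge U V E vid p xs v) \<and>
         (\<forall>v\<in>R. \<forall>v'\<in>R. wedge_type E sg xs v = wedge_type E sg xs v')"
proof -
  have "is_biclique U V E L R" and "card L = p"
    using assms(5) unfolding is_pq_biclique_def by auto
  then show ?thesis
    using signed_wedge_if_biclique wedge_type_eq_if_balanced_biclique assms(1,6-9)
    by (metis order_refl)
qed

end
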